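(* Let $G$ and $H$ be groups with $G$ finitely generated, torsion-free and residually finite. Suppose that $1\times H$ is a characteristic subgroup of $G\times H$. Then $\operatorname{Spec}_R(G\times H)=\operatorname{Spec}_R(G)\cdot\operatorname{Spec}_R(H)$.
   Context: $R(\psi)$ is the Reidemeister number of an endomorphism $\psi$ of a group $A$ (number of classes of $x\sim gx\psi(g)^{-1}$), $\operatorname{Spec}_R(A)=\{R(\psi)\mid\psi\in\operatorname{Aut}(A)\}$, and for $S,T\subseteq\mathbb{N}\cup\{\infty\}$, $S\cdot T=\{st\mid s\in S,t\in T\}$ with $a\cdot\infty=\infty$. *)

theory Defs
  imports "HOL-Algebra.Algebra" "HOL-Library.Extended_Nat"
begin

definition fin_gen_group :: "('a, 'c) monoid_scheme \<Rightarrow> bool" where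
  "fin_gen_group G \<longleftrightarrow> (\<exists>S. finite S \<and> S \<subseteq> carrier G \<and> generate G S = carrier G)"

definition torsion_free :: "('a, 'c) monoid_scheme \<Rightarrow> bool" where
  "torsion_free G \<longleftrightarrow>
     (\<forall>x \<in> carrier G. \<forall>n::nat. n > 0 \<longrightarrow> x [^]\<^bsub>G\<^esub> n = \<one>\<^bsub>G\<^esub> \<longrightarrow> x = \<one>\<^bsub>G\<^esub>)"

definition residually_finite :: "('a, 'c) monoid_scheme \<Rightarrow> bool" where
  "residually_finite G \<longleftrightarrow>
     (\<forall>x \<in> carrier G. x \<noteq> \<one>\<^bsub>G\<^esub> \<longrightarrow>
        (\<exists>N. N \<lhd> G \<and> finite (rcosets\<^bsub>G\<^esub> N) \<and> x \<notin> N))"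

definition characteristic :: "'a set \<Rightarrow> ('a, 'c) monoid_scheme \<Rightarrow> bool" where
  "characteristic N G \<longleftrightarrow> subgroup N G \<and> (\<forall>\<phi> \<in> auto G. \<phi> ` N = N)"

definition reid_classes :: "('a, 'c) monoid_scheme \<Rightarrow> ('a \<Rightarrow> 'a) \<Rightarrow> 'a set set" where
  "reid_classes G \<psi> =
     (\<lambda>x. {g \<otimes>\<^bsub>G\<^esub> x \<otimes>\<^bsub>G\<^esub> inv\<^bsub>G\<^esub> (\<psi> g) | g. g \<in> carrier G}) ` carrier G"

definition reidemeister :: "('a, 'c) monoid_scheme \<Rightarrow> ('a \<Rightarrow> 'a) \<Rightarrow> enat" where
  "reidemeister G \<psi> =
     (if finite (reid_classes G \<psi>) then enat (card (reid_classes G \<psi>)) else \<infinity>)"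

definition spec_R :: "('a, 'c) monoid_scheme \<Rightarrow> enat set" where
  "spec_R G = {reidemeister G \<psi> | \<psi>. \<psi> \<in> auto G}"

definition rmul :: "enat \<Rightarrow> enat \<Rightarrow> enat" where
  "rmul a b = (if a = \<infinity> \<or> b = \<infinity> then \<infinity> else a * b)"

definition set_rmul :: "enat set \<Rightarrow> enat set \<Rightarrow> enat set" where
  "set_rmul S T = {rmul s t | s t. s \<in> S \<and> t \<in> T}"

end

theory Submission
  imports Defs
begin

text \<open>Every automorphism \<phi> of \<open>G \<times> H\<close> preserving \<open>1 \<times> H\<close> has the triangular form
  \<open>\<phi>(g, h) = (\<alpha> g, \<delta>(g) \<beta>(h))\<close> with \<open>\<alpha> \<in> Aut(G)\<close>, \<open>\<beta> \<in> Aut(H)\<close>. Projecting the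
  twisted classes of \<phi> to \<open>G\<close> gives those of \<alpha>; when moreover the twisted action
  \<open>x \<cdot> g = x g \<alpha>(x)\<inverse>\<close> of \<open>G\<close> on itself is free, the fibre over each class of \<alpha> is in
  bijection with the classes of \<beta>, so \<open>R(\<phi>) = R(\<alpha>) R(\<beta>)\<close>; conversely every product
  \<open>\<alpha> \<times> \<beta>\<close> is such an automorphism.

  Freeness holds whenever \<open>R(\<alpha>) < \<infinity>\<close>: after composing \<alpha> with an inner automorphism it
  amounts to \<alpha> having no fixed point \<open>x \<noteq> 1\<close>. For an endomorphism of a finite group with
  \<open>r\<close> twisted classes, the orbit-stabilizer theorem and Landau's bound on Egyptian fractions
  give at most \<open>r\<^bsup>2^r\<^esup>\<close> fixed points. Since \<open>G\<close> is finitely generated and residually finite,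
  there is an \<alpha>-invariant normal subgroup of finite index avoiding \<open>x, \<dots>, x\<^bsup>M\<^esup>\<close>, and
  torsion-freeness makes these powers nontrivial; in the finite quotient they give more than
  \<open>r\<^bsup>2^r\<^esup>\<close> fixed points.\<close>

section \<open>Egyptian fractions\<close>

lemma egyptian_fraction_min_denominator_le:
  fixes s :: "'i \<Rightarrow> nat"
  assumes I: "finite I" "m \<in> I" and min: "\<forall>j\<in>I. s m \<le> s j" and pos: "\<forall>j\<in>I. s j \<ge> 1"
    and sum: "(\<Sum>j\<in>I. 1 / real (s j)) = real p / real q" and q: "q \<ge> 1"
  shows "s m \<le> card I * q"
proof -
  have "real p / real q = (\<Sum>j\<in>I. 1 / real (s j))" using sum ..
  also have "\<dots> \<le> (\<Sum>j\<in>I. 1 / real (s m))"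
    using min pos by (intro sum_mono) (use I(2) in \<open>auto simp: frac_le\<close>)
  also have "\<dots> = real (card I) / real (s m)" by simp
  finally have le: "real p / real q \<le> real (card I) / real (s m)" .
  have "(\<Sum>j\<in>I. 1 / real (s j)) > 0"
    using I pos by (intro sum_pos) fastforce+
  hence "p \<ge> 1" using sum by (cases p) auto
  hence "real (s m) \<le> real p * real (s m)" by (simp add: mult_le_cancel_right1)
  also have "\<dots> \<le> real (card I) * real q"
    using le pos q I(2) by (auto simp: divide_simps)
  finally show ?thesis by (metis of_nat_le_iff of_nat_mult)
qed

lemma egyptian_fraction_remove:
  fixes s :: "'i \<Rightarrow> nat"
  assumes I: "finite I" "m \<in> I" and pos: "\<forall>j\<in>I. s j \<ge> 1" and q: "q \<ge> 1"
    and sum: "(\<Sum>j\<in>I. 1 / real (s j)) = real p / real q"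
  shows "(\<Sum>j\<in>I - {m}. 1 / real (s j)) = real (p * s m - q) / real (q * s m)"
proof -
  have sm: "s m \<ge> 1" using pos I(2) by blast
  have rest: "(\<Sum>j\<in>I - {m}. 1 / real (s j)) = (real p * real (s m) - real q) / (real q * real (s m))"
    using I sum sm q by (simp add: sum.remove field_simps)
  have "(\<Sum>j\<in>I - {m}. 1 / real (s j)) \<ge> 0" by (rule sum_nonneg) auto
  moreover have "real q * real (s m) > 0" using sm q by simp
  ultimately have "real p * real (s m) - real q \<ge> 0"
    using rest by (metis not_less zero_le_divide_iff)
  hence "q \<le> p * s m" by (metis diff_ge_0_iff_ge of_nat_le_iff of_nat_mult)
  then show ?thesis using rest by simp
qed

text \<open>Landau's bound. Removing the smallest denominator \<open>s m \<le> k q\<close> leaves a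
  decomposition of \<open>(p s m - q) / (q s m)\<close> into \<open>k - 1\<close> unit fractions.\<close>
lemma egyptian_fraction_denominator_bound:
  fixes s :: "'i \<Rightarrow> nat"
  assumes "finite I" "\<forall>j\<in>I. s j \<ge> 1" "q \<ge> 1"
    and "(\<Sum>j\<in>I. 1 / real (s j)) = real p / real q" and "i \<in> I"
  shows "s i \<le> (card I * q) ^ (2 ^ card I)"
  using assms
proof (induction "card I" arbitrary: I q p i)
  case 0
  then show ?case by auto
next
  case (Suc k)
  define m where "m = arg_min_on s I"
  have ne: "I \<noteq> {}" using Suc.prems(5) by blast
  have m: "m \<in> I" "\<forall>j\<in>I. s m \<le> s j"
    unfolding m_def using arg_min_if_finite(1)[OF Suc.prems(1) ne] arg_min_least[OF Suc.prems(1) ne]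
    by auto
  have sm: "s m \<ge> 1" using Suc.prems(2) m(1) by blast
  have smb: "s m \<le> Suc k * q"
    using egyptian_fraction_min_denominator_le[OF Suc.prems(1) m _ Suc.prems(4,3)] Suc.prems(2) Suc.hyps(2)
    by simp
  show ?case
  proof (cases "i = m")
    case True
    have "Suc k * q \<le> (Suc k * q) ^ (2 ^ Suc k)"
      using Suc.prems(3) by (simp add: self_le_power)
    then show ?thesis using smb True Suc.hyps(2) by simp
  next
    case False
    let ?I = "I - {m}"
    have rest: "(\<Sum>j\<in>?I. 1 / real (s j)) = real (p * s m - q) / real (q * s m)"
      by (rule egyptian_fraction_remove[OF Suc.prems(1) m(1) Suc.prems(2,3,4)])
    have card_rest: "card ?I = k" using Suc.hyps(2) Suc.prems(1) m(1) by simp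
    have "s i \<le> (card ?I * (q * s m)) ^ (2 ^ card ?I)"
      by (rule Suc.hyps(1)[OF _ _ _ _ rest])
        (use Suc.hyps(2) Suc.prems(1-3,5) m(1) False sm in auto)
    also have "\<dots> = (k * q * s m) ^ (2 ^ k)" by (simp add: card_rest mult.assoc)
    also have "\<dots> \<le> (Suc k * q * (Suc k * q)) ^ (2 ^ k)"
      using smb by (intro power_mono mult_le_mono) auto
    also have "\<dots> = (Suc k * q) ^ (2 ^ Suc k)"
      by (simp add: power_mult[symmetric] power2_eq_square[symmetric] mult.commute)
    finally show ?thesis using Suc.hyps(2) by simp
  qed
qed

section \<open>Twisted conjugacy\<close>

definition twisted_conj :: "('a, 'c) monoid_scheme \<Rightarrow> ('a \<Rightarrow> 'a) \<Rightarrow> 'a \<Rightarrow> 'a \<Rightarrow> 'a" where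
  "twisted_conj G \<psi> g x = g \<otimes>\<^bsub>G\<^esub> x \<otimes>\<^bsub>G\<^esub> inv\<^bsub>G\<^esub> (\<psi> g)"

definition twisted_action :: "('a, 'c) monoid_scheme \<Rightarrow> ('a \<Rightarrow> 'a) \<Rightarrow> 'a \<Rightarrow> 'a \<Rightarrow> 'a" where
  "twisted_action G \<psi> g = (\<lambda>x\<in>carrier G. twisted_conj G \<psi> g x)"

definition twisted_class :: "('a, 'c) monoid_scheme \<Rightarrow> ('a \<Rightarrow> 'a) \<Rightarrow> 'a \<Rightarrow> 'a set" where
  "twisted_class G \<psi> x = (\<lambda>g. twisted_conj G \<psi> g x) ` carrier G"

lemma reid_classes_eq_twisted_classes: "reid_classes G \<psi> = twisted_class G \<psi> ` carrier G"
  by (auto simp: reid_classes_def twisted_class_def twisted_conj_def Setcompr_eq_image)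

lemma orbit_twisted_action:
  "x \<in> carrier G \<Longrightarrow> orbit G (twisted_action G \<psi>) x = twisted_class G \<psi> x"
  by (auto simp: orbit_def twisted_action_def twisted_class_def)

lemma reid_classes_eq_orbits: "reid_classes G \<psi> = orbits G (carrier G) (twisted_action G \<psi>)"
  by (simp add: reid_classes_eq_twisted_classes orbits_def orbit_twisted_action Setcompr_eq_image)

locale group_endo = group G for G (structure) +
  fixes \<psi> assumes endo: "\<psi> \<in> hom G G"
begin

lemma endo_closed [simp]: "x \<in> carrier G \<Longrightarrow> \<psi> x \<in> carrier G"
  using endo by (auto simp: hom_def)

lemma endo_mult: "x \<in> carrier G \<Longrightarrow> y \<in> carrier G \<Longrightarrow> \<psi> (x \<otimes> y) = \<psi> x \<otimes> \<psi> y"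
  using endo by (simp add: hom_mult)

lemma twisted_conj_closed [simp]:
  "g \<in> carrier G \<Longrightarrow> x \<in> carrier G \<Longrightarrow> twisted_conj G \<psi> g x \<in> carrier G"
  by (simp add: twisted_conj_def)

lemma twisted_conj_mult:
  "g \<in> carrier G \<Longrightarrow> h \<in> carrier G \<Longrightarrow> x \<in> carrier G \<Longrightarrow>
   twisted_conj G \<psi> (g \<otimes> h) x = twisted_conj G \<psi> g (twisted_conj G \<psi> h x)"
  by (simp add: twisted_conj_def endo_mult inv_mult_group m_assoc)

lemma twisted_conj_one [simp]: "x \<in> carrier G \<Longrightarrow> twisted_conj G \<psi> \<one> x = x"
  by (simp add: twisted_conj_def hom_one[OF endo is_group is_group])

lemma twisted_conj_inv:
  assumes "g \<in> carrier G" "x \<in> carrier G"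
  shows "twisted_conj G \<psi> (inv g) (twisted_conj G \<psi> g x) = x"
    and "twisted_conj G \<psi> g (twisted_conj G \<psi> (inv g) x) = x"
  using assms twisted_conj_mult[of "inv g" g x] twisted_conj_mult[of g "inv g" x]
  by (simp_all add: twisted_conj_def hom_one[OF endo is_group is_group])

lemma twisted_action_Bij: "g \<in> carrier G \<Longrightarrow> twisted_action G \<psi> g \<in> Bij (carrier G)"
  unfolding Bij_def twisted_action_def
  by (auto intro!: bij_betw_byWitness[where f' = "twisted_conj G \<psi> (inv g)"] twisted_conj_inv)

sublocale twisted: group_action G "carrier G" "twisted_action G \<psi>"
  unfolding group_action_def group_hom_def group_hom_axioms_def
proof (intro conjI homI)
  show "group (BijGroup (carrier G))" by (rule group_BijGroup)
  show "twisted_action G \<psi> g \<in> carrier (BijGroup (carrier G))" if "g \<in> carrier G" for g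
    using twisted_action_Bij[OF that] by (simp add: BijGroup_def)
  show "twisted_action G \<psi> (g \<otimes> h) =
        twisted_action G \<psi> g \<otimes>\<^bsub>BijGroup (carrier G)\<^esub> twisted_action G \<psi> h"
    if "g \<in> carrier G" "h \<in> carrier G" for g h
    using that twisted_action_Bij[OF that(1)] twisted_action_Bij[OF that(2)]
    by (simp add: BijGroup_def) (auto simp: compose_def twisted_action_def twisted_conj_mult)
qed (rule is_group)

lemma twisted_class_self: "x \<in> carrier G \<Longrightarrow> x \<in> twisted_class G \<psi> x"
  using twisted.orbit_refl by (simp add: orbit_twisted_action)

lemma twisted_class_subset: "x \<in> carrier G \<Longrightarrow> twisted_class G \<psi> x \<subseteq> carrier G"
  by (auto simp: twisted_class_def)

lemma twisted_class_eq:
  assumes x: "x \<in> carrier G" and y: "y \<in> twisted_class G \<psi> x"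
  shows "twisted_class G \<psi> y = twisted_class G \<psi> x"
proof -
  have yc: "y \<in> carrier G" using twisted_class_subset[OF x] y by blast
  have x_y: "x \<in> twisted_class G \<psi> y"
    using twisted.orbit_sym[OF x yc] y x yc by (simp add: orbit_twisted_action)
  show ?thesis
    using twisted.orbit_trans[OF x yc] twisted.orbit_trans[OF yc x] x y yc x_y
      twisted_class_subset[OF x] twisted_class_subset[OF yc]
    by (auto simp: orbit_twisted_action)
qed

lemma twisted_class_twisted_conj [simp]:
  "g \<in> carrier G \<Longrightarrow> x \<in> carrier G \<Longrightarrow> twisted_class G \<psi> (twisted_conj G \<psi> g x) = twisted_class G \<psi> x"
  by (rule twisted_class_eq) (auto simp: twisted_class_def)

lemma reid_class_member:
  assumes "C \<in> reid_classes G \<psi>" "y \<in> C"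
  shows "y \<in> carrier G" "twisted_class G \<psi> y = C"
proof -
  obtain x where x: "x \<in> carrier G" "C = twisted_class G \<psi> x"
    using assms(1) by (auto simp: reid_classes_eq_twisted_classes)
  then show "y \<in> carrier G" using assms(2) twisted_class_subset by blast
  show "twisted_class G \<psi> y = C" using twisted_class_eq[OF x(1)] x(2) assms(2) by simp
qed

lemma reid_class_some_member: "C \<in> reid_classes G \<psi> \<Longrightarrow> (SOME x. x \<in> C) \<in> C"
  by (auto simp: reid_classes_eq_twisted_classes intro: someI twisted_class_self)

lemma stabilizer_one_eq_fixed_points:
  "stabilizer G (twisted_action G \<psi>) \<one> = {x \<in> carrier G. \<psi> x = x}"
  by (auto simp: stabilizer_def twisted_action_def twisted_conj_def inv_solve_right')

text \<open>The twisted classes \<open>C\<close> partition \<open>G\<close> and have sizes \<open>|G| / s\<^sub>C\<close> with stabilizer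
  orders \<open>s\<^sub>C\<close>, so \<open>\<Sum> 1 / s\<^sub>C = 1\<close>; the class of \<open>1\<close> has stabilizer \<open>Fix \<psi>\<close>.\<close>
lemma card_fixed_points_le:
  assumes fin: "finite (carrier G)"
  defines "r \<equiv> card (reid_classes G \<psi>)"
  shows "card {x \<in> carrier G. \<psi> x = x} \<le> r ^ (2 ^ r)"
proof -
  let ?Cs = "orbits G (carrier G) (twisted_action G \<psi>)"
  let ?stab = "stabilizer G (twisted_action G \<psi>)"
  define s where "s C = order G div card C" for C :: "'a set"
  have order_pos: "order G > 0" using fin by (simp add: order_gt_0_iff_finite)
  have orbit_sizes: "card C * s C = order G \<and> s C \<ge> 1" if C: "C \<in> ?Cs" for C
  proof -
    obtain x where x: "x \<in> carrier G" "C = orbit G (twisted_action G \<psi>) x"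
      using C by (auto simp: orbits_def)
    have os: "card C * card (?stab x) = order G"
      using twisted.orbit_stabilizer_theorem[OF x(1)] x(2) by simp
    hence "s C = card (?stab x)"
      using order_pos unfolding s_def by (metis mult_eq_0_iff neq0_conv nonzero_mult_div_cancel_left)
    then show ?thesis using os order_pos by (auto simp: Suc_le_eq simp flip: os)
  qed
  have finO: "finite ?Cs" using fin by (simp add: orbits_def)
  have "(\<Sum>C\<in>?Cs. 1 / real (s C)) = (\<Sum>C\<in>?Cs. real (card C) / real (order G))"
  proof (rule sum.cong[OF refl])
    fix C assume "C \<in> ?Cs"
    with orbit_sizes[of C] order_pos
    show "1 / real (s C) = real (card C) / real (order G)"
      by (auto simp: field_simps simp flip: of_nat_mult)
  qed
  also have "\<dots> = real (\<Sum>C\<in>?Cs. card C) / real (order G)"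
    by (simp add: sum_divide_distrib)
  also have "(\<Sum>C\<in>?Cs. card C) = order G"
    using twisted.disjoint_sum[OF fin, of "\<lambda>_. 1::nat"] by (simp add: order_def flip: card_eq_sum)
  finally have sum: "(\<Sum>C\<in>?Cs. 1 / real (s C)) = real 1 / real 1" using order_pos by simp
  let ?C1 = "orbit G (twisted_action G \<psi>) \<one>"
  have O1: "?C1 \<in> ?Cs" by (auto simp: orbits_def)
  have "s ?C1 \<le> (card ?Cs * 1) ^ (2 ^ card ?Cs)"
    by (rule egyptian_fraction_denominator_bound[OF finO _ _ sum O1]) (use orbit_sizes in auto)
  moreover have "s ?C1 = card (?stab \<one>)"
    using twisted.orbit_stabilizer_theorem[of \<one>] order_pos unfolding s_def
    by (metis one_closed mult_eq_0_iff neq0_conv nonzero_mult_div_cancel_left)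
  ultimately show ?thesis
    by (simp add: r_def reid_classes_eq_orbits stabilizer_one_eq_fixed_points)
qed

end

lemma reid_classes_surj_hom_image:
  assumes "group_hom G F \<pi>" and surj: "\<pi> ` carrier G = carrier F"
    and "\<alpha> \<in> hom G G"
    and comm: "\<And>g. g \<in> carrier G \<Longrightarrow> \<psi> (\<pi> g) = \<pi> (\<alpha> g)"
  shows "reid_classes F \<psi> = (\<lambda>C. \<pi> ` C) ` reid_classes G \<alpha>"
proof -
  interpret group_hom G F \<pi> by fact
  interpret group_endo G \<alpha> by unfold_locales fact
  have class_image: "twisted_class F \<psi> (\<pi> x) = \<pi> ` twisted_class G \<alpha> x" if x: "x \<in> carrier G" for x
    unfolding twisted_class_def surj[symmetric] image_image
    by (rule image_cong) (auto simp: twisted_conj_def comm x)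
  show ?thesis
    unfolding reid_classes_eq_twisted_classes surj[symmetric] image_image
    by (rule image_cong) (auto simp: class_image)
qed

text \<open>Fixed points map to fixed points, and passing to the quotient does not increase the
  number of twisted classes.\<close>
lemma card_image_fixed_points_le:
  assumes "group_hom G F \<pi>" and surj: "\<pi> ` carrier G = carrier F"
    and \<alpha>: "\<alpha> \<in> hom G G" and \<psi>: "\<psi> \<in> hom F F"
    and comm: "\<And>g. g \<in> carrier G \<Longrightarrow> \<psi> (\<pi> g) = \<pi> (\<alpha> g)"
    and finF: "finite (carrier F)" and finR: "finite (reid_classes G \<alpha>)"
  defines "r \<equiv> card (reid_classes G \<alpha>)"
  shows "card (\<pi> ` {x \<in> carrier G. \<alpha> x = x}) \<le> r ^ (2 ^ r)"
proof -
  interpret group_hom G F \<pi> by fact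
  interpret F: group_endo F \<psi> by unfold_locales fact
  let ?r = "card (reid_classes F \<psi>)"
  have "reid_classes F \<psi> = (\<lambda>C. \<pi> ` C) ` reid_classes G \<alpha>"
    by (rule reid_classes_surj_hom_image[OF assms(1) surj \<alpha> comm])
  then have r: "?r \<le> r" using card_image_le[OF finR] by (simp add: r_def)
  have r_pos: "r \<ge> 1"
    using finR by (auto simp: r_def Suc_le_eq card_gt_0_iff reid_classes_def)
  have "\<pi> ` {x \<in> carrier G. \<alpha> x = x} \<subseteq> {y \<in> carrier F. \<psi> y = y}"
    using comm by auto
  hence "card (\<pi> ` {x \<in> carrier G. \<alpha> x = x}) \<le> card {y \<in> carrier F. \<psi> y = y}"
    by (rule card_mono[rotated]) (use finF in simp)
  also have "\<dots> \<le> ?r ^ (2 ^ ?r)" by (rule F.card_fixed_points_le[OF finF])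
  also have "\<dots> \<le> r ^ (2 ^ ?r)" by (rule power_mono[OF r]) simp
  also have "\<dots> \<le> r ^ (2 ^ r)" by (rule power_increasing) (use r r_pos in auto)
  finally show ?thesis .
qed

section \<open>Subgroups of finite index in finitely generated groups\<close>

locale right_action = group G for G (structure) +
  fixes E and act :: "'e \<Rightarrow> 'a \<Rightarrow> 'e"
  assumes act_closed: "i \<in> E \<Longrightarrow> g \<in> carrier G \<Longrightarrow> act i g \<in> E"
    and act_one: "i \<in> E \<Longrightarrow> act i \<one> = i"
    and act_mult: "i \<in> E \<Longrightarrow> g \<in> carrier G \<Longrightarrow> h \<in> carrier G \<Longrightarrow> act i (g \<otimes> h) = act (act i g) h"

lemma (in group) right_actions_eq_on_generate:
  assumes "right_action G E act1" "right_action G E act2" and S: "S \<subseteq> carrier G"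
    and agree: "\<And>s i. s \<in> S \<Longrightarrow> i \<in> E \<Longrightarrow> act1 i s = act2 i s"
    and g: "g \<in> generate G S"
  shows "\<forall>i\<in>E. act1 i g = act2 i g"
proof -
  interpret A1: right_action G E act1 by fact
  interpret A2: right_action G E act2 by fact
  show ?thesis using g
  proof (induction rule: generate.induct)
    case one
    then show ?case by (simp add: A1.act_one A2.act_one)
  next
    case (incl h)
    then show ?case by (simp add: agree)
  next
    case (inv h)
    have h: "h \<in> carrier G" using inv S by blast
    show ?case
    proof
      fix i assume i: "i \<in> E"
      let ?k = "act2 i (inv h)"
      have k: "?k \<in> E" using A2.act_closed[OF i] h by simp
      have "act1 ?k h = i"
        using agree[OF inv k] A2.act_mult[OF i _ h, symmetric] A2.act_one[OF i] h by simp
      hence "act1 i (inv h) = act1 (act1 ?k h) (inv h)" by simp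
      also have "\<dots> = ?k" using A1.act_mult[OF k h, of "inv h"] A1.act_one[OF k] h by simp
      finally show "act1 i (inv h) = ?k" .
    qed
  next
    case (eng g h)
    have gh: "g \<in> carrier G" "h \<in> carrier G"
      using eng.hyps generate_in_carrier[OF S] by auto
    show ?case
    proof
      fix i assume i: "i \<in> E"
      have "act1 i (g \<otimes> h) = act1 (act1 i g) h" by (rule A1.act_mult[OF i gh])
      also have "\<dots> = act2 (act2 i g) h"
        using eng.IH A2.act_closed[OF i gh(1)] i by simp
      also have "\<dots> = act2 i (g \<otimes> h)" by (rule A2.act_mult[OF i gh, symmetric])
      finally show "act1 i (g \<otimes> h) = act2 i (g \<otimes> h)" .
    qed
  qed
qed

definition coset_index_action ::
  "('a, 'c) monoid_scheme \<Rightarrow> 'a set \<Rightarrow> ('a set \<Rightarrow> nat) \<Rightarrow> nat \<Rightarrow> 'a \<Rightarrow> nat" where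
  "coset_index_action G N b i g = b (inv_into (rcosets\<^bsub>G\<^esub> N) b i #>\<^bsub>G\<^esub> g)"

context group
begin

lemma r_coset_in_rcosets:
  assumes "subgroup N G" "C \<in> rcosets N" "g \<in> carrier G"
  shows "C #> g \<in> rcosets N"
proof -
  obtain x where x: "x \<in> carrier G" "C = N #> x" using assms(2) by (auto simp: RCOSETS_def)
  have "C #> g = N #> (x \<otimes> g)"
    using x assms(1,3) by (simp add: coset_mult_assoc subgroup.subset)
  thus ?thesis using x assms(1,3) by (simp add: rcosetsI subgroup.subset)
qed

lemma right_action_coset_index:
  assumes N: "subgroup N G" and b: "bij_betw b (rcosets N) {..<m}"
  shows "right_action G {..<m} (coset_index_action G N b)"
proof
  have inv_b: "inv_into (rcosets N) b i \<in> rcosets N" if "i < m" for i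
    using bij_betw_apply[OF bij_betw_inv_into[OF b]] that by simp
  have b_inv: "b (inv_into (rcosets N) b i) = i" if "i < m" for i
    using b that by (simp add: bij_betw_inv_into_right)
  have coset_carrier: "C \<subseteq> carrier G" if "C \<in> rcosets N" for C
    using subgroup.rcosets_carrier[OF N is_group that] .
  show closed: "coset_index_action G N b i g \<in> {..<m}" if "i \<in> {..<m}" "g \<in> carrier G" for i g
    using that inv_b b r_coset_in_rcosets[OF N]
    by (auto simp: coset_index_action_def bij_betw_def)
  show "coset_index_action G N b i \<one> = i" if "i \<in> {..<m}" for i
    using that inv_b b_inv coset_carrier by (simp add: coset_index_action_def)
  show "coset_index_action G N b i (g \<otimes> h) =
        coset_index_action G N b (coset_index_action G N b i g) h"
    if "i \<in> {..<m}" "g \<in> carrier G" "h \<in> carrier G" for i g h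
    using that inv_b coset_carrier r_coset_in_rcosets[OF N]
    by (simp add: coset_index_action_def bij_betw_inv_into_left[OF b] coset_mult_assoc)
qed

lemma subgroup_eq_coset_index_stabilizer:
  assumes N: "subgroup N G" and b: "bij_betw b (rcosets N) {..<m}"
  shows "N = {g \<in> carrier G. coset_index_action G N b (b N) g = b N}"
proof -
  have N_in: "N \<in> rcosets N" using subgroup.subgroup_in_rcosets[OF N is_group] .
  have "coset_index_action G N b (b N) g = b N \<longleftrightarrow> g \<in> N" if g: "g \<in> carrier G" for g
  proof -
    have "coset_index_action G N b (b N) g = b (N #> g)"
      by (simp add: coset_index_action_def bij_betw_inv_into_left[OF b N_in])
    also have "\<dots> = b N \<longleftrightarrow> N #> g = N"
      using b r_coset_in_rcosets[OF N N_in g] N_in by (auto simp: bij_betw_def inj_on_def)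
    also have "\<dots> \<longleftrightarrow> g \<in> N"
      using g N by (metis coset_join2 rcos_self)
    finally show ?thesis .
  qed
  then show ?thesis using subgroup.subset[OF N] by blast
qed

lemma subgroup_eq_if_coset_index_actions_agree:
  assumes gen: "generate G S = carrier G" "S \<subseteq> carrier G"
    and N1: "subgroup N1 G" "bij_betw b1 (rcosets N1) {..<m}"
    and N2: "subgroup N2 G" "bij_betw b2 (rcosets N2) {..<m}"
    and base: "b1 N1 = b2 N2"
    and agree: "\<And>s i. s \<in> S \<Longrightarrow> i < m \<Longrightarrow>
      coset_index_action G N1 b1 i s = coset_index_action G N2 b2 i s"
  shows "N1 = N2"
proof -
  have "\<forall>i\<in>{..<m}. coset_index_action G N1 b1 i g = coset_index_action G N2 b2 i g"
    if "g \<in> carrier G" for g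
    using right_actions_eq_on_generate[OF right_action_coset_index[OF N1] right_action_coset_index[OF N2]
        gen(2)] agree that gen(1) by auto
  moreover have "b1 N1 < m"
    using N1 subgroup.subgroup_in_rcosets[OF N1(1) is_group] by (auto simp: bij_betw_def)
  ultimately have "{g \<in> carrier G. coset_index_action G N1 b1 (b1 N1) g = b1 N1} =
      {g \<in> carrier G. coset_index_action G N2 b2 (b2 N2) g = b2 N2}"
    using base by auto
  then show ?thesis
    using subgroup_eq_coset_index_stabilizer[OF N1] subgroup_eq_coset_index_stabilizer[OF N2] by metis
qed

text \<open>A subgroup of index \<open>m\<close> is the stabilizer of a point in an action of \<open>G\<close> on \<open>{..<m}\<close>,
  and such an action is determined by the images of finitely many generators.\<close>
theorem finite_subgroups_bounded_index:
  assumes "fin_gen_group G"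
  shows "finite {N. subgroup N G \<and> finite (rcosets N) \<and> card (rcosets N) \<le> n}"
    (is "finite ?\<N>")
proof -
  obtain S where S: "finite S" "S \<subseteq> carrier G" "generate G S = carrier G"
    using assms by (auto simp: fin_gen_group_def)
  define m where "m N = card (rcosets N)" for N
  define b where "b N = (SOME f. bij_betw f (rcosets N) {..<m N})" for N
  define act where "act N = coset_index_action G N (b N)" for N
  have b: "bij_betw (b N) (rcosets N) {..<m N}" if "N \<in> ?\<N>" for N
  proof -
    have "\<exists>f. bij_betw f (rcosets N) {..<m N}"
      using that ex_bij_betw_finite_nat[of "rcosets N"] by (auto simp: m_def atLeast0LessThan)
    then show ?thesis unfolding b_def by (rule someI_ex)
  qed
  have action: "right_action G {..<m N} (act N)" if "N \<in> ?\<N>" for N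
    using right_action_coset_index b[OF that] that by (simp add: act_def)
  define code where
    "code N = (m N, b N N, restrict (\<lambda>(s, i). act N i s) (S \<times> {..<m N}))" for N
  have inj: "inj_on code ?\<N>"
  proof (rule inj_onI)
    fix N1 N2 assume N1: "N1 \<in> ?\<N>" and N2: "N2 \<in> ?\<N>" and eq: "code N1 = code N2"
    have m: "m N1 = m N2" and base: "b N1 N1 = b N2 N2" using eq by (simp_all add: code_def)
    have tables: "restrict (\<lambda>(s, i). act N1 i s) (S \<times> {..<m N1}) =
          restrict (\<lambda>(s, i). act N2 i s) (S \<times> {..<m N1})"
      using eq m by (simp add: code_def)
    show "N1 = N2"
    proof (rule subgroup_eq_if_coset_index_actions_agree[OF S(3,2) _ b[OF N1] _ b[OF N2, folded m] base])
      show "coset_index_action G N1 (b N1) i s = coset_index_action G N2 (b N2) i s"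
        if "s \<in> S" "i < m N1" for s i
        using fun_cong[OF tables, of "(s, i)"] that by (simp add: act_def)
    qed (use N1 N2 in auto)
  qed
  have "code ` ?\<N> \<subseteq> (\<Union>k\<le>n. {k} \<times> {..<k} \<times> (S \<times> {..<k} \<rightarrow>\<^sub>E {..<k}))"
  proof
    fix c assume "c \<in> code ` ?\<N>"
    then obtain N where N: "N \<in> ?\<N>" "c = code N" by auto
    have "b N N < m N"
      using b[OF N(1)] subgroup.subgroup_in_rcosets[OF _ is_group] N(1) by (auto simp: bij_betw_def)
    moreover have "m N \<le> n" using N(1) by (simp add: m_def)
    ultimately show "c \<in> (\<Union>k\<le>n. {k} \<times> {..<k} \<times> (S \<times> {..<k} \<rightarrow>\<^sub>E {..<k}))"
      using right_action.act_closed[OF action[OF N(1)]] S(2) N(2) by (auto simp: code_def)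
  qed
  moreover have "finite (\<Union>k\<le>n. {k} \<times> {..<k} \<times> (S \<times> {..<k} \<rightarrow>\<^sub>E {..<k}))"
    using S(1) by (intro finite_UN_I finite_cartesian_product finite_PiE) auto
  ultimately have "finite (code ` ?\<N>)" by (rule finite_subset)
  then show ?thesis using inj by (rule finite_imageD)
qed

lemma r_coset_Inter:
  assumes ne: "\<A> \<noteq> {}" and sub: "\<And>N. N \<in> \<A> \<Longrightarrow> subgroup N G" and x: "x \<in> carrier G"
  shows "\<Inter>\<A> #> x = (\<Inter>N\<in>\<A>. N #> x)"
proof -
  have sub_Inter: "subgroup (\<Inter>\<A>) G" by (rule subgroups_Inter) (use ne sub in auto)
  have "y \<in> \<Inter>\<A> #> x \<longleftrightarrow> y \<in> (\<Inter>N\<in>\<A>. N #> x)" for y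
  proof (cases "y \<in> carrier G")
    case True
    then show ?thesis
      using subgroup.rcos_module[OF sub_Inter is_group x True]
        subgroup.rcos_module[OF sub is_group x True] by auto
  next
    case False
    then show ?thesis
      using r_coset_subset_G[OF subgroup.subset[OF sub_Inter] x]
        r_coset_subset_G[OF subgroup.subset[OF sub] x] ne by auto
  qed
  then show ?thesis by blast
qed

lemma finite_rcosets_Inter:
  assumes "finite \<A>" "\<A> \<noteq> {}" and sub: "\<And>N. N \<in> \<A> \<Longrightarrow> subgroup N G \<and> finite (rcosets N)"
  shows "finite (rcosets (\<Inter>\<A>))"
proof (rule finite_subset)
  show "rcosets (\<Inter>\<A>) \<subseteq> (\<lambda>c. \<Inter>N\<in>\<A>. c N) ` (\<Pi>\<^sub>E N\<in>\<A>. rcosets N)"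
  proof
    fix C assume "C \<in> rcosets (\<Inter>\<A>)"
    then obtain x where x: "x \<in> carrier G" "C = \<Inter>\<A> #> x" by (auto simp: RCOSETS_def)
    have "C = (\<lambda>c. \<Inter>N\<in>\<A>. c N) (\<lambda>N\<in>\<A>. N #> x)"
      using x r_coset_Inter[OF assms(2) _ x(1)] sub by simp
    moreover have "(\<lambda>N\<in>\<A>. N #> x) \<in> (\<Pi>\<^sub>E N\<in>\<A>. rcosets N)"
      using x(1) by (auto simp: RCOSETS_def)
    ultimately show "C \<in> (\<lambda>c. \<Inter>N\<in>\<A>. c N) ` (\<Pi>\<^sub>E N\<in>\<A>. rcosets N)" by blast
  qed
  show "finite ((\<lambda>c. \<Inter>N\<in>\<A>. c N) ` (\<Pi>\<^sub>E N\<in>\<A>. rcosets N))"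
    using assms by (intro finite_imageI finite_PiE) auto
qed

lemma normal_Inter:
  assumes "\<A> \<noteq> {}" "\<And>N. N \<in> \<A> \<Longrightarrow> N \<lhd> G"
  shows "\<Inter>\<A> \<lhd> G"
proof (rule normal_invI)
  show "subgroup (\<Inter>\<A>) G" by (rule subgroups_Inter) (use assms in \<open>auto simp: normal_def\<close>)
  show "x \<otimes> h \<otimes> inv x \<in> \<Inter>\<A>" if "x \<in> carrier G" "h \<in> \<Inter>\<A>" for x h
    using that assms normal_invE(2) by blast
qed

lemma hom_image_r_coset:
  assumes "\<phi> \<in> hom G G" "N \<subseteq> carrier G" "x \<in> carrier G"
  shows "\<phi> ` (N #> x) = \<phi> ` N #> \<phi> x"
proof -
  have "\<phi> ` (N #> x) = (\<lambda>h. \<phi> (h \<otimes> x)) ` N" by (auto simp: r_coset_def)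
  also have "\<dots> = (\<lambda>h. \<phi> h \<otimes> \<phi> x) ` N"
    by (rule image_cong) (use assms in \<open>auto simp: hom_mult\<close>)
  finally show ?thesis by (auto simp: r_coset_def)
qed

lemma bij_betw_rcosets_auto_image:
  assumes \<phi>: "\<phi> \<in> auto G" and N: "subgroup N G"
  shows "bij_betw (\<lambda>C. \<phi> ` C) (rcosets N) (rcosets (\<phi> ` N))"
proof (rule bij_betw_imageI)
  have hom: "\<phi> \<in> hom G G" and surj: "\<phi> ` carrier G = carrier G" and inj: "inj_on \<phi> (carrier G)"
    using \<phi> by (auto simp: auto_def Bij_def bij_betw_def)
  show "inj_on (\<lambda>C. \<phi> ` C) (rcosets N)"
    by (rule inj_on_subset[OF inj_on_image[of \<phi> "Pow (carrier G)"]])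
      (use inj subgroup.rcosets_carrier[OF N is_group] in auto)
  have "rcosets (\<phi> ` N) = (\<lambda>x. \<phi> ` N #> x) ` \<phi> ` carrier G"
    by (auto simp: surj RCOSETS_def)
  also have "\<dots> = (\<lambda>x. \<phi> ` (N #> x)) ` carrier G"
    unfolding image_image using hom_image_r_coset[OF hom subgroup.subset[OF N]] by simp
  finally show "(\<lambda>C. \<phi> ` C) ` (rcosets N) = rcosets (\<phi> ` N)"
    by (auto simp: RCOSETS_def)
qed

text \<open>There are only finitely many normal subgroups of index at most \<open>[G : L]\<close>, and
  \<open>\<phi>\<close> permutes them, so their intersection is \<open>\<phi>\<close>-invariant.\<close>
lemma obtain_auto_invariant_normal_subgroup:
  assumes fg: "fin_gen_group G" and \<phi>: "\<phi> \<in> auto G" and L: "L \<lhd> G" "finite (rcosets L)"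
  obtains K where "K \<lhd> G" "finite (rcosets K)" "\<phi> ` K = K" "K \<subseteq> L"
proof -
  let ?\<N> = "{N. N \<lhd> G \<and> finite (rcosets N) \<and> card (rcosets N) \<le> card (rcosets L)}"
  have hom: "\<phi> \<in> hom G G" and surj: "\<phi> ` carrier G = carrier G" and inj: "inj_on \<phi> (carrier G)"
    using \<phi> by (auto simp: auto_def Bij_def bij_betw_def)
  have N_sub: "N \<subseteq> carrier G" if "N \<in> ?\<N>" for N
    using that by (auto simp: normal_def subgroup_def)
  have fin: "finite ?\<N>"
    by (rule finite_subset[OF _ finite_subgroups_bounded_index[OF fg]]) (auto simp: normal_def)
  have L_in: "L \<in> ?\<N>" using L by simp
  have "(\<lambda>N. \<phi> ` N) ` ?\<N> \<subseteq> ?\<N>"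
  proof clarify
    fix N assume N: "N \<lhd> G" "finite (rcosets N)" "card (rcosets N) \<le> card (rcosets L)"
    have "group_hom G G \<phi>" using hom by (simp add: group_hom_def group_hom_axioms_def is_group)
    then have "\<phi> ` N \<lhd> G" using normal.surj_hom_normal_subgroup[OF N(1)] surj by blast
    moreover have "bij_betw (\<lambda>C. \<phi> ` C) (rcosets N) (rcosets (\<phi> ` N))"
      using bij_betw_rcosets_auto_image[OF \<phi>] N(1) by (simp add: normal_def)
    ultimately show "\<phi> ` N \<lhd> G \<and> finite (rcosets (\<phi> ` N)) \<and> card (rcosets (\<phi> ` N)) \<le> card (rcosets L)"
      using N by (metis bij_betw_finite bij_betw_same_card)
  qed
  moreover have "inj_on (\<lambda>N. \<phi> ` N) ?\<N>"
    by (rule inj_on_subset[OF inj_on_image[of \<phi> "Pow (carrier G)"]]) (use inj N_sub in auto)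
  ultimately have perm: "(\<lambda>N. \<phi> ` N) ` ?\<N> = ?\<N>" by (rule endo_inj_surj[OF fin])
  have "\<phi> ` \<Inter>?\<N> = (\<Inter>N\<in>?\<N>. \<phi> ` N)"
    using image_INT[OF inj, of ?\<N> "\<lambda>N. N" L] N_sub L_in by simp
  also have "\<dots> = \<Inter>?\<N>" by (simp only: perm)
  finally have "\<phi> ` \<Inter>?\<N> = \<Inter>?\<N>" .
  moreover have "\<Inter>?\<N> \<lhd> G" by (rule normal_Inter) (use L_in in auto)
  moreover have "finite (rcosets (\<Inter>?\<N>))"
    by (rule finite_rcosets_Inter[OF fin]) (use L_in in \<open>auto simp: normal_def\<close>)
  moreover have "\<Inter>?\<N> \<subseteq> L" using L_in by blast
  ultimately show ?thesis using that by blast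
qed

end

section \<open>Automorphisms with finitely many twisted classes\<close>

lemma (in normal) induced_hom_FactGroup:
  assumes \<alpha>: "\<alpha> \<in> hom G G" and inv: "\<alpha> ` H = H"
  shows "g \<in> carrier G \<Longrightarrow> \<alpha> ` (H #> g) = H #> \<alpha> g"
    and "(\<lambda>C. \<alpha> ` C) \<in> hom (G Mod H) (G Mod H)"
proof -
  show coset: "\<alpha> ` (H #> g) = H #> \<alpha> g" if "g \<in> carrier G" for g
    using hom_image_r_coset[OF \<alpha> subset that] inv by simp
  have closed: "\<alpha> g \<in> carrier G" if "g \<in> carrier G" for g using \<alpha> that by (simp add: hom_in_carrier)
  show "(\<lambda>C. \<alpha> ` C) \<in> hom (G Mod H) (G Mod H)"
  proof (rule homI)
    fix C assume "C \<in> carrier (G Mod H)"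
    then obtain g where "g \<in> carrier G" "C = H #> g" by (auto simp: carrier_FactGroup)
    then show "\<alpha> ` C \<in> carrier (G Mod H)" using coset closed by (auto simp: carrier_FactGroup)
  next
    fix C D assume "C \<in> carrier (G Mod H)" "D \<in> carrier (G Mod H)"
    then obtain g h where g: "g \<in> carrier G" "C = H #> g" and h: "h \<in> carrier G" "D = H #> h"
      by (auto simp: carrier_FactGroup)
    then show "\<alpha> ` (C \<otimes>\<^bsub>G Mod H\<^esub> D) = \<alpha> ` C \<otimes>\<^bsub>G Mod H\<^esub> \<alpha> ` D"
      using coset closed \<alpha> by (simp add: rcos_sum hom_mult)
  qed
qed

lemma (in normal) card_fixed_points_FactGroup_le:
  assumes \<alpha>: "\<alpha> \<in> hom G G" "\<alpha> ` H = H"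
    and fin: "finite (rcosets H)" "finite (reid_classes G \<alpha>)"
  defines "r \<equiv> card (reid_classes G \<alpha>)"
  shows "card ((\<lambda>g. H #> g) ` {x \<in> carrier G. \<alpha> x = x}) \<le> r ^ (2 ^ r)"
proof -
  have \<pi>: "group_hom G (G Mod H) (\<lambda>g. H #> g)"
    using r_coset_hom_Mod factorgroup_is_group by (simp add: group_hom_def group_hom_axioms_def is_group)
  have surj: "(\<lambda>g. H #> g) ` carrier G = carrier (G Mod H)" by (simp add: carrier_FactGroup)
  have finite: "finite (carrier (G Mod H))" using fin(1) by (simp add: FactGroup_def)
  have comm: "\<alpha> ` (H #> g) = H #> \<alpha> g" if "g \<in> carrier G" for g
    by (rule induced_hom_FactGroup(1)[OF \<alpha> that])
  show ?thesis
    using card_image_fixed_points_le[OF \<pi> surj \<alpha>(1) induced_hom_FactGroup(2)[OF \<alpha>] comm finite fin(2)]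
    unfolding r_def .
qed

context group
begin

lemma inj_on_r_coset_powers:
  fixes M :: nat
  assumes K: "subgroup K G" and x: "x \<in> carrier G"
    and avoid: "\<And>j::nat. 1 \<le> j \<Longrightarrow> j \<le> M \<Longrightarrow> x [^] j \<notin> K"
  shows "inj_on (\<lambda>j. K #> x [^] j) {..M}"
proof -
  have main: "i = j" if ij: "i \<le> j" "j \<le> M" and eq: "K #> x [^] i = K #> x [^] j" for i j :: nat
  proof (rule ccontr)
    assume "i \<noteq> j"
    have "x [^] j \<in> K #> x [^] i" using eq rcos_self[OF _ K] x by simp
    hence "x [^] j \<otimes> inv (x [^] i) \<in> K" using subgroup.rcos_module[OF K is_group] x by simp
    moreover have "x [^] j \<otimes> inv (x [^] i) = x [^] (j - i)"
      using x nat_pow_mult[OF x, of "j - i" i] ij(1) by (simp add: inv_solve_right')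
    ultimately show False using avoid[of "j - i"] ij \<open>i \<noteq> j\<close> by simp
  qed
  show ?thesis
  proof (rule inj_onI)
    fix i j assume "i \<in> {..M}" "j \<in> {..M}" "K #> x [^] i = K #> x [^] j"
    then show "i = j" using main[of i j] main[of j i] by (cases "i \<le> j") auto
  qed
qed

lemma obtain_normal_subgroup_avoiding_powers:
  fixes M :: nat
  assumes tf: "torsion_free G" and rf: "residually_finite G" and x: "x \<in> carrier G" "x \<noteq> \<one>"
  obtains L where "L \<lhd> G" "finite (rcosets L)" "\<And>j::nat. 1 \<le> j \<Longrightarrow> j \<le> M \<Longrightarrow> x [^] j \<notin> L"
proof -
  have "x [^] j \<noteq> \<one>" if "j \<ge> 1" for j :: nat
  proof -
    have "0 < j" using that by simp
    then show ?thesis using tf x unfolding torsion_free_def by blast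
  qed
  then have "\<forall>j\<in>{1..M}. \<exists>N. N \<lhd> G \<and> finite (rcosets N) \<and> x [^] j \<notin> N"
    using rf nat_pow_closed[OF x(1)] unfolding residually_finite_def by simp
  then obtain N where N: "\<forall>j\<in>{1..M}. N j \<lhd> G \<and> finite (rcosets (N j)) \<and> x [^] j \<notin> N j"
    by (rule bchoice[elim_format]) blast
  let ?\<A> = "insert (carrier G) (N ` {1..M})"
  have "rcosets (carrier G) \<subseteq> {carrier G}"
    by (auto simp: RCOSETS_def coset_join2[OF _ subgroup_self])
  then have "finite (rcosets (carrier G))" by (rule finite_subset) simp
  then have \<A>: "A \<lhd> G \<and> finite (rcosets A)" if "A \<in> ?\<A>" for A
    using that N normal_self by auto
  show ?thesis
  proof (rule that)
    show "\<Inter>?\<A> \<lhd> G" by (rule normal_Inter) (use \<A> in auto)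
    show "finite (rcosets (\<Inter>?\<A>))"
      by (rule finite_rcosets_Inter) (use \<A> in \<open>auto simp: normal_def\<close>)
    show "x [^] j \<notin> \<Inter>?\<A>" if "1 \<le> j" "j \<le> M" for j
    proof -
      have "j \<in> {1..M}" using that by simp
      with N show ?thesis by blast
    qed
  qed
qed

text \<open>If \<open>x \<noteq> 1\<close> is fixed by \<open>\<alpha>\<close>, choose an \<open>\<alpha>\<close>-invariant normal subgroup \<open>K\<close> of finite
  index avoiding \<open>x, \<dots>, x\<^bsup>M\<^esup>\<close> for \<open>M = r\<^bsup>2^r\<^esup>\<close>, \<open>r = R(\<alpha>)\<close>: their images are \<open>M + 1\<close>
  distinct fixed points of the endomorphism induced on \<open>G/K\<close>.\<close>
theorem fixed_point_trivial_if_finite_reidemeister: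
  assumes fg: "fin_gen_group G" and tf: "torsion_free G" and rf: "residually_finite G"
    and \<alpha>: "\<alpha> \<in> auto G" and fin: "finite (reid_classes G \<alpha>)"
    and x: "x \<in> carrier G" "\<alpha> x = x"
  shows "x = \<one>"
proof (rule ccontr)
  assume x1: "x \<noteq> \<one>"
  define r where "r = card (reid_classes G \<alpha>)"
  define M where "M = r ^ (2 ^ r)"
  obtain L where L: "L \<lhd> G" "finite (rcosets L)" "\<And>j. 1 \<le> j \<Longrightarrow> j \<le> M \<Longrightarrow> x [^] j \<notin> L"
    using obtain_normal_subgroup_avoiding_powers[OF tf rf x(1) x1] by blast
  obtain K where K: "K \<lhd> G" "finite (rcosets K)" "\<alpha> ` K = K" "K \<subseteq> L"
    using obtain_auto_invariant_normal_subgroup[OF fg \<alpha> L(1,2)] by blast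
  interpret K: normal K G by (rule K(1))
  have \<alpha>_hom: "\<alpha> \<in> hom G G" using \<alpha> by (simp add: auto_def)
  let ?\<pi> = "\<lambda>g. K #> g"
  let ?Fix = "{y \<in> carrier G. \<alpha> y = y}"
  have inj: "inj_on (\<lambda>j. ?\<pi> (x [^] j)) {..M}"
    by (rule inj_on_r_coset_powers[OF K.subgroup_axioms x(1)]) (use L(3) K(4) in blast)
  have "Suc M = card ((\<lambda>j. ?\<pi> (x [^] j)) ` {..M})" using card_image[OF inj] by simp
  also have "\<dots> \<le> card (?\<pi> ` ?Fix)"
  proof (rule card_mono)
    show "finite (?\<pi> ` ?Fix)"
      by (rule finite_subset[OF _ K(2)]) (auto simp: RCOSETS_def)
    show "(\<lambda>j. ?\<pi> (x [^] j)) ` {..M} \<subseteq> ?\<pi> ` ?Fix"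
      using x hom_nat_pow[OF \<alpha>_hom x(1) is_group is_group] by auto
  qed
  also have "\<dots> \<le> M"
    unfolding M_def r_def by (rule K.card_fixed_points_FactGroup_le[OF \<alpha>_hom K(3,2) fin])
  finally show False by simp
qed

lemma inner_twist_auto:
  assumes \<alpha>: "\<alpha> \<in> auto G" and g: "g \<in> carrier G"
  shows "(\<lambda>y\<in>carrier G. g \<otimes> \<alpha> y \<otimes> inv g) \<in> auto G"
proof -
  let ?c = "\<lambda>h\<in>carrier G. g \<otimes> h \<otimes> inv g"
  have cancel: "inv g \<otimes> (g \<otimes> z) = z" if "z \<in> carrier G" for z
    using g that by (simp add: m_assoc[symmetric])
  have "?c \<in> hom G G"
    by (rule homI) (use g in \<open>auto simp: m_assoc cancel\<close>)
  then have c: "?c \<in> auto G"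
    using conjugation_is_bij[OF g] by (simp add: auto_def Bij_def)
  have "compose (carrier G) ?c \<alpha> \<in> auto G"
    using subgroup.m_closed[OF subgroup_auto c \<alpha>] c \<alpha> by (simp add: BijGroup_def auto_def)
  moreover have "compose (carrier G) ?c \<alpha> = (\<lambda>y\<in>carrier G. g \<otimes> \<alpha> y \<otimes> inv g)"
    using \<alpha> by (auto simp: compose_def auto_def hom_in_carrier)
  ultimately show ?thesis by simp
qed

lemma twisted_class_inner_twist:
  assumes \<alpha>: "\<alpha> \<in> hom G G" and g: "g \<in> carrier G" and y: "y \<in> carrier G"
  shows "twisted_class G (\<lambda>y\<in>carrier G. g \<otimes> \<alpha> y \<otimes> inv g) y = twisted_class G \<alpha> (y \<otimes> g) #> inv g"
proof -
  have "twisted_conj G (\<lambda>y\<in>carrier G. g \<otimes> \<alpha> y \<otimes> inv g) z y = twisted_conj G \<alpha> z (y \<otimes> g) \<otimes> inv g"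
    if z: "z \<in> carrier G" for z
    using z y g hom_in_carrier[OF \<alpha> z] by (simp add: twisted_conj_def inv_mult_group m_assoc)
  then show ?thesis by (auto simp: twisted_class_def r_coset_def)
qed

text \<open>A point of \<open>g\<close>'s stabilizer under twisted conjugation by \<open>\<alpha>\<close> is a fixed point of
  the automorphism \<open>y \<mapsto> g \<alpha>(y) g\<inverse>\<close>, whose twisted classes are translates of those of \<open>\<alpha>\<close>.\<close>
theorem twisted_stabilizer_trivial_if_finite_reidemeister:
  assumes fg: "fin_gen_group G" and tf: "torsion_free G" and rf: "residually_finite G"
    and \<alpha>: "\<alpha> \<in> auto G" and fin: "finite (reid_classes G \<alpha>)"
    and g: "g \<in> carrier G" and x: "x \<in> carrier G" and fixed: "twisted_conj G \<alpha> x g = g"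
  shows "x = \<one>"
proof -
  let ?\<alpha>' = "\<lambda>y\<in>carrier G. g \<otimes> \<alpha> y \<otimes> inv g"
  have \<alpha>_hom: "\<alpha> \<in> hom G G" using \<alpha> by (simp add: auto_def)
  have "reid_classes G ?\<alpha>' \<subseteq> (\<lambda>C. C #> inv g) ` reid_classes G \<alpha>"
    using twisted_class_inner_twist[OF \<alpha>_hom g] g by (auto simp: reid_classes_eq_twisted_classes)
  then have "finite (reid_classes G ?\<alpha>')" using fin by (meson finite_imageI finite_subset)
  moreover have "?\<alpha>' x = x"
    using fixed x g hom_in_carrier[OF \<alpha>_hom x]
    by (simp add: twisted_conj_def inv_solve_right' m_assoc[symmetric])
  ultimately show ?thesis
    using fixed_point_trivial_if_finite_reidemeister[OF fg tf rf inner_twist_auto[OF \<alpha> g]] x by blast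
qed

end

section \<open>Direct products\<close>

lemma bij_betw_Times_fibres:
  assumes "f ` S \<subseteq> A" and fibres: "\<And>a. a \<in> A \<Longrightarrow> bij_betw (F a) B {x \<in> S. f x = a}"
  shows "bij_betw (\<lambda>(a, b). F a b) (A \<times> B) S"
proof (rule bij_betw_imageI)
  show "inj_on (\<lambda>(a, b). F a b) (A \<times> B)"
  proof (rule inj_onI, clarify)
    fix a b a' b' assume ab: "a \<in> A" "b \<in> B" "a' \<in> A" "b' \<in> B" and eq: "F a b = F a' b'"
    have "f (F a b) = a" "f (F a' b') = a'"
      using bij_betw_apply[OF fibres[OF ab(1)] ab(2)] bij_betw_apply[OF fibres[OF ab(3)] ab(4)] by auto
    with eq have "a = a'" by simp
    with eq ab show "a = a' \<and> b = b'" using fibres[OF ab(1)] by (auto simp: bij_betw_def inj_on_def)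
  qed
  show "(\<lambda>(a, b). F a b) ` (A \<times> B) = S"
  proof
    show "(\<lambda>(a, b). F a b) ` (A \<times> B) \<subseteq> S" using fibres by (auto dest: bij_betw_apply)
    show "S \<subseteq> (\<lambda>(a, b). F a b) ` (A \<times> B)"
    proof
      fix x assume x: "x \<in> S"
      then have "f x \<in> A" using assms(1) by blast
      then have "x \<in> F (f x) ` B" using fibres[of "f x"] x by (simp add: bij_betw_def)
      then obtain b where "b \<in> B" "F (f x) b = x" by (metis imageE)
      then show "x \<in> (\<lambda>(a, b). F a b) ` (A \<times> B)" using \<open>f x \<in> A\<close> by force
    qed
  qed
qed

lemma rmul_card_Times:
  assumes "A \<noteq> {}" "B \<noteq> {}"
  shows "rmul (if finite A then enat (card A) else \<infinity>) (if finite B then enat (card B) else \<infinity>) =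
    (if finite (A \<times> B) then enat (card (A \<times> B)) else \<infinity>)"
  using assms by (auto simp: rmul_def finite_cartesian_product_iff card_cartesian_product)

locale triangular_endo = G: group G + H: group H
  for G :: "('a, 'c) monoid_scheme" and H :: "('b, 'd) monoid_scheme" +
  fixes \<alpha> \<beta> \<delta> \<phi>
  assumes \<alpha>: "\<alpha> \<in> hom G G" and \<beta>: "\<beta> \<in> hom H H"
    and \<delta>: "\<And>g. g \<in> carrier G \<Longrightarrow> \<delta> g \<in> carrier H" and \<delta>_one: "\<delta> \<one>\<^bsub>G\<^esub> = \<one>\<^bsub>H\<^esub>"
    and \<phi>: "\<phi> \<in> hom (G \<times>\<times> H) (G \<times>\<times> H)"
    and \<phi>_eq: "\<And>g h. g \<in> carrier G \<Longrightarrow> h \<in> carrier H \<Longrightarrow> \<phi> (g, h) = (\<alpha> g, \<delta> g \<otimes>\<^bsub>H\<^esub> \<beta> h)"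
begin

sublocale A: group_endo G \<alpha> by unfold_locales (rule \<alpha>)
sublocale B: group_endo H \<beta> by unfold_locales (rule \<beta>)
sublocale P: group_endo "G \<times>\<times> H" \<phi>
  by (intro group_endo.intro group_endo_axioms.intro DirProd_group G.is_group H.is_group \<phi>)

abbreviation pair_class :: "'a \<times> 'b \<Rightarrow> ('a \<times> 'b) set" where
  "pair_class \<equiv> twisted_class (G \<times>\<times> H) \<phi>"

lemma twisted_conj_pair:
  assumes "x \<in> carrier G" "g \<in> carrier G" "y \<in> carrier H" "h \<in> carrier H"
  shows "twisted_conj (G \<times>\<times> H) \<phi> (x, y) (g, h) =
    (twisted_conj G \<alpha> x g, y \<otimes>\<^bsub>H\<^esub> h \<otimes>\<^bsub>H\<^esub> inv\<^bsub>H\<^esub> (\<delta> x \<otimes>\<^bsub>H\<^esub> \<beta> y))"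
  using assms \<delta> by (simp add: twisted_conj_def \<phi>_eq G.is_group H.is_group)

lemma fst_pair_class:
  assumes "g \<in> carrier G" "h \<in> carrier H"
  shows "fst ` pair_class (g, h) = twisted_class G \<alpha> g"
  using assms by (force simp: twisted_class_def twisted_conj_pair image_iff)

lemma pair_class_eq_if_snd_related:
  assumes "g \<in> carrier G" "h \<in> carrier H" "h' \<in> twisted_class H \<beta> h"
  shows "pair_class (g, h') = pair_class (g, h)"
proof -
  obtain y where y: "y \<in> carrier H" "h' = twisted_conj H \<beta> y h"
    using assms(3) by (auto simp: twisted_class_def)
  then have "(g, h') = twisted_conj (G \<times>\<times> H) \<phi> (\<one>\<^bsub>G\<^esub>, y) (g, h)"
    using assms by (simp add: twisted_conj_pair \<delta>_one) (simp add: twisted_conj_def)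
  then show ?thesis using assms y by simp
qed

lemma pair_class_shift_fst:
  assumes "x \<in> carrier G" "g \<in> carrier G" "h \<in> carrier H"
  obtains h' where "h' \<in> carrier H" "pair_class (twisted_conj G \<alpha> x g, h') = pair_class (g, h)"
proof
  let ?h' = "h \<otimes>\<^bsub>H\<^esub> inv\<^bsub>H\<^esub> (\<delta> x)"
  show "?h' \<in> carrier H" using assms \<delta> by simp
  have "(twisted_conj G \<alpha> x g, ?h') = twisted_conj (G \<times>\<times> H) \<phi> (x, \<one>\<^bsub>H\<^esub>) (g, h)"
    using assms \<delta> by (simp add: twisted_conj_pair hom_one[OF \<beta> H.is_group H.is_group])
  then show "pair_class (twisted_conj G \<alpha> x g, ?h') = pair_class (g, h)" using assms by simp
qed

lemma snd_related_if_pair_class_eq: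
  assumes free: "\<And>x. x \<in> carrier G \<Longrightarrow> twisted_conj G \<alpha> x g = g \<Longrightarrow> x = \<one>\<^bsub>G\<^esub>"
    and g: "g \<in> carrier G" and h: "h \<in> carrier H" "h' \<in> carrier H"
    and eq: "pair_class (g, h) = pair_class (g, h')"
  shows "twisted_class H \<beta> h' = twisted_class H \<beta> h"
proof -
  have "(g, h') \<in> pair_class (g, h)" using eq P.twisted_class_self[of "(g, h')"] g h by simp
  then obtain x y where xy: "x \<in> carrier G" "y \<in> carrier H"
      "(g, h') = twisted_conj (G \<times>\<times> H) \<phi> (x, y) (g, h)"
    by (auto simp: twisted_class_def)
  then have pair: "(g, h') = (twisted_conj G \<alpha> x g, y \<otimes>\<^bsub>H\<^esub> h \<otimes>\<^bsub>H\<^esub> inv\<^bsub>H\<^esub> (\<delta> x \<otimes>\<^bsub>H\<^esub> \<beta> y))"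
    using g h(1) by (simp only: twisted_conj_pair)
  have "x = \<one>\<^bsub>G\<^esub>" using pair free[OF xy(1)] by (metis fst_conv)
  moreover have "h' = y \<otimes>\<^bsub>H\<^esub> h \<otimes>\<^bsub>H\<^esub> inv\<^bsub>H\<^esub> (\<delta> x \<otimes>\<^bsub>H\<^esub> \<beta> y)"
    using pair by (metis snd_conv)
  ultimately have "h' = twisted_conj H \<beta> y h"
    using xy(2) h(1) by (simp add: \<delta>_one twisted_conj_def)
  then show ?thesis using h(1) xy(2) by simp
qed

lemma bij_betw_pair_classes_fibre:
  assumes free: "\<And>x. x \<in> carrier G \<Longrightarrow> twisted_conj G \<alpha> x g = g \<Longrightarrow> x = \<one>\<^bsub>G\<^esub>"
    and g: "g \<in> carrier G" and rep: "\<And>b. b \<in> reid_classes H \<beta> \<Longrightarrow> rep b \<in> b"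
  shows "bij_betw (\<lambda>b. pair_class (g, rep b)) (reid_classes H \<beta>)
    {c \<in> reid_classes (G \<times>\<times> H) \<phi>. fst ` c = twisted_class G \<alpha> g}"
proof (rule bij_betw_imageI)
  have rep_class: "rep b \<in> carrier H" "twisted_class H \<beta> (rep b) = b"
    if "b \<in> reid_classes H \<beta>" for b
    using B.reid_class_member[OF that rep[OF that]] by simp_all
  show "inj_on (\<lambda>b. pair_class (g, rep b)) (reid_classes H \<beta>)"
  proof (rule inj_onI)
    fix b b' assume b: "b \<in> reid_classes H \<beta>" "b' \<in> reid_classes H \<beta>"
      and eq: "pair_class (g, rep b) = pair_class (g, rep b')"
    have "twisted_class H \<beta> (rep b') = twisted_class H \<beta> (rep b)"
      by (rule snd_related_if_pair_class_eq[OF free g _ _ eq]) (use rep_class b in auto)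
    then show "b = b'" using rep_class b by simp
  qed
  show "(\<lambda>b. pair_class (g, rep b)) ` reid_classes H \<beta> =
      {c \<in> reid_classes (G \<times>\<times> H) \<phi>. fst ` c = twisted_class G \<alpha> g}"
  proof (intro equalityI subsetI)
    fix c assume "c \<in> (\<lambda>b. pair_class (g, rep b)) ` reid_classes H \<beta>"
    then obtain b where b: "b \<in> reid_classes H \<beta>" "c = pair_class (g, rep b)" by blast
    have "c \<in> reid_classes (G \<times>\<times> H) \<phi>"
      unfolding reid_classes_eq_twisted_classes b(2) using g rep_class(1)[OF b(1)] by simp
    moreover have "fst ` c = twisted_class G \<alpha> g" using b g rep_class(1) by (simp add: fst_pair_class)
    ultimately show "c \<in> {c \<in> reid_classes (G \<times>\<times> H) \<phi>. fst ` c = twisted_class G \<alpha> g}" by simp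
  next
    fix c assume "c \<in> {c \<in> reid_classes (G \<times>\<times> H) \<phi>. fst ` c = twisted_class G \<alpha> g}"
    then obtain g' h where gh: "g' \<in> carrier G" "h \<in> carrier H" "c = pair_class (g', h)"
      and "twisted_class G \<alpha> g' = twisted_class G \<alpha> g"
      by (auto simp: reid_classes_eq_twisted_classes fst_pair_class)
    then have "g \<in> twisted_class G \<alpha> g'" using A.twisted_class_self[OF g] by simp
    then obtain x where x: "x \<in> carrier G" "g = twisted_conj G \<alpha> x g'"
      by (auto simp: twisted_class_def)
    obtain h' where h': "h' \<in> carrier H" "pair_class (g, h') = c"
      using pair_class_shift_fst[OF x(1) gh(1,2)] x(2) gh(3) by metis
    let ?b = "twisted_class H \<beta> h'"
    have b: "?b \<in> reid_classes H \<beta>" using h' by (simp add: reid_classes_eq_twisted_classes)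
    have "pair_class (g, rep ?b) = c"
      using pair_class_eq_if_snd_related[OF g h'(1) rep[OF b]] h'(2) by simp
    then show "c \<in> (\<lambda>b. pair_class (g, rep b)) ` reid_classes H \<beta>" using b by blast
  qed
qed

lemma reid_classes_eq_fst_image: "reid_classes G \<alpha> = (\<lambda>c. fst ` c) ` reid_classes (G \<times>\<times> H) \<phi>"
proof -
  have "(\<lambda>c. fst ` c) ` reid_classes (G \<times>\<times> H) \<phi> =
      (\<lambda>p. twisted_class G \<alpha> (fst p)) ` (carrier G \<times> carrier H)"
    unfolding reid_classes_eq_twisted_classes carrier_DirProd image_image
    by (rule image_cong[OF refl], clarify, simp add: fst_pair_class)
  also have "\<dots> = reid_classes G \<alpha>"
    unfolding reid_classes_eq_twisted_classes image_image[of _ fst, symmetric]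
    using H.one_closed by (simp add: fst_image_times) blast
  finally show ?thesis ..
qed

text \<open>When the twisted action of \<open>\<alpha>\<close> is free, choosing a representative of each class
  identifies the Reidemeister classes of \<open>\<phi>\<close> with pairs of classes of \<open>\<alpha>\<close> and \<open>\<beta>\<close>.\<close>
theorem reidemeister_triangular:
  assumes free: "finite (reid_classes G \<alpha>) \<Longrightarrow>
      (\<And>g x. g \<in> carrier G \<Longrightarrow> x \<in> carrier G \<Longrightarrow> twisted_conj G \<alpha> x g = g \<Longrightarrow> x = \<one>\<^bsub>G\<^esub>)"
  shows "reidemeister (G \<times>\<times> H) \<phi> = rmul (reidemeister G \<alpha>) (reidemeister H \<beta>)"
proof -
  let ?X = "reid_classes (G \<times>\<times> H) \<phi>" and ?A = "reid_classes G \<alpha>" and ?B = "reid_classes H \<beta>"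
  show ?thesis
  proof (cases "finite ?A")
    case False
    then have "\<not> finite ?X" using reid_classes_eq_fst_image by auto
    with False show ?thesis by (simp add: reidemeister_def rmul_def)
  next
    case True
    let ?rep = "\<lambda>C. SOME x. x \<in> C"
    have bij: "bij_betw (\<lambda>(a, b). pair_class (?rep a, ?rep b)) (?A \<times> ?B) ?X"
    proof (rule bij_betw_Times_fibres[where f = "\<lambda>c. fst ` c"])
      show "(\<lambda>c. fst ` c) ` ?X \<subseteq> ?A" using reid_classes_eq_fst_image by simp
      show "bij_betw (\<lambda>b. pair_class (?rep a, ?rep b)) ?B {c \<in> ?X. fst ` c = a}" if a: "a \<in> ?A" for a
      proof -
        let ?g = "?rep a"
        have g: "?g \<in> carrier G" "twisted_class G \<alpha> ?g = a"
          using A.reid_class_member[OF a A.reid_class_some_member[OF a]] by simp_all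
        have "bij_betw (\<lambda>b. pair_class (?g, ?rep b)) ?B {c \<in> ?X. fst ` c = twisted_class G \<alpha> ?g}"
          by (rule bij_betw_pair_classes_fibre[OF free[OF True g(1)] g(1) B.reid_class_some_member])
        then show ?thesis using g(2) by simp
      qed
    qed
    have "reidemeister (G \<times>\<times> H) \<phi> = (if finite (?A \<times> ?B) then enat (card (?A \<times> ?B)) else \<infinity>)"
      unfolding reidemeister_def
      using bij_betw_finite[OF bij, symmetric] bij_betw_same_card[OF bij, symmetric] by simp
    also have "\<dots> = rmul (reidemeister G \<alpha>) (reidemeister H \<beta>)"
      unfolding reidemeister_def
      by (rule rmul_card_Times[symmetric])
        (use G.one_closed H.one_closed in \<open>auto simp: reid_classes_eq_twisted_classes\<close>)
    finally show ?thesis .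
  qed
qed

end

lemma auto_DirProd:
  assumes "group G" "group H" and \<alpha>: "\<alpha> \<in> auto G" and \<beta>: "\<beta> \<in> auto H"
  shows "restrict (\<lambda>(g, h). (\<alpha> g, \<beta> h)) (carrier (G \<times>\<times> H)) \<in> auto (G \<times>\<times> H)"
proof -
  let ?\<psi> = "\<lambda>(g, h). (\<alpha> g, \<beta> h)"
  have "\<alpha> \<in> iso G G" "\<beta> \<in> iso H H" using \<alpha> \<beta> by (auto simp: auto_def Bij_def iso_def)
  then have "?\<psi> \<in> iso (G \<times>\<times> H) (G \<times>\<times> H)"
    using iso_paired2[OF assms(1,2)] by blast
  then have hom: "?\<psi> \<in> hom (G \<times>\<times> H) (G \<times>\<times> H)"
    and bij: "bij_betw ?\<psi> (carrier (G \<times>\<times> H)) (carrier (G \<times>\<times> H))"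
    by (simp_all add: iso_def)
  have "restrict ?\<psi> (carrier (G \<times>\<times> H)) \<in> hom (G \<times>\<times> H) (G \<times>\<times> H)"
    by (rule group.hom_restrict[OF DirProd_group[OF assms(1,2)] hom]) simp
  moreover have "bij_betw (restrict ?\<psi> (carrier (G \<times>\<times> H))) (carrier (G \<times>\<times> H)) (carrier (G \<times>\<times> H)) =
      bij_betw ?\<psi> (carrier (G \<times>\<times> H)) (carrier (G \<times>\<times> H))"
    by (rule bij_betw_cong) simp
  ultimately show ?thesis using bij by (simp add: auto_def Bij_def)
qed

locale factor_preserving_auto = G: group G + H: group H
  for G :: "('a, 'c) monoid_scheme" and H :: "('b, 'd) monoid_scheme" +
  fixes \<phi>
  assumes auto: "\<phi> \<in> auto (G \<times>\<times> H)"
    and preserves: "\<phi> ` ({\<one>\<^bsub>G\<^esub>} \<times> carrier H) = {\<one>\<^bsub>G\<^esub>} \<times> carrier H"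
begin

definition fst_part :: "'a \<Rightarrow> 'a" where "fst_part = (\<lambda>g\<in>carrier G. fst (\<phi> (g, \<one>\<^bsub>H\<^esub>)))"
definition snd_part :: "'b \<Rightarrow> 'b" where "snd_part = (\<lambda>h\<in>carrier H. snd (\<phi> (\<one>\<^bsub>G\<^esub>, h)))"
definition shear :: "'a \<Rightarrow> 'b" where "shear g = snd (\<phi> (g, \<one>\<^bsub>H\<^esub>))"

lemma \<phi>_hom: "\<phi> \<in> hom (G \<times>\<times> H) (G \<times>\<times> H)"
  and \<phi>_bij: "bij_betw \<phi> (carrier G \<times> carrier H) (carrier G \<times> carrier H)"
  using auto by (auto simp: auto_def Bij_def)

lemma \<phi>_closed: "g \<in> carrier G \<Longrightarrow> h \<in> carrier H \<Longrightarrow> \<phi> (g, h) \<in> carrier G \<times> carrier H"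
  using hom_in_carrier[OF \<phi>_hom] by simp

lemma \<phi>_mult:
  "g \<in> carrier G \<Longrightarrow> h \<in> carrier H \<Longrightarrow> g' \<in> carrier G \<Longrightarrow> h' \<in> carrier H \<Longrightarrow>
   \<phi> (g \<otimes>\<^bsub>G\<^esub> g', h \<otimes>\<^bsub>H\<^esub> h') = \<phi> (g, h) \<otimes>\<^bsub>G \<times>\<times> H\<^esub> \<phi> (g', h')"
  using hom_mult[OF \<phi>_hom, of "(g, h)" "(g', h')"] by simp

lemma fst_\<phi>_one: "h \<in> carrier H \<Longrightarrow> fst (\<phi> (\<one>\<^bsub>G\<^esub>, h)) = \<one>\<^bsub>G\<^esub>"
proof -
  assume "h \<in> carrier H"
  then have "\<phi> (\<one>\<^bsub>G\<^esub>, h) \<in> {\<one>\<^bsub>G\<^esub>} \<times> carrier H" using preserves by blast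
  then show ?thesis by auto
qed

lemma shear_closed: "g \<in> carrier G \<Longrightarrow> shear g \<in> carrier H"
  using \<phi>_closed[of g "\<one>\<^bsub>H\<^esub>"] by (auto simp: shear_def mem_Times_iff)

lemma fst_part_closed: "g \<in> carrier G \<Longrightarrow> fst_part g \<in> carrier G"
  using \<phi>_closed[of g "\<one>\<^bsub>H\<^esub>"] by (auto simp: fst_part_def mem_Times_iff)

lemma snd_part_closed: "h \<in> carrier H \<Longrightarrow> snd_part h \<in> carrier H"
  using \<phi>_closed[of "\<one>\<^bsub>G\<^esub>" h] by (auto simp: snd_part_def mem_Times_iff)

lemma \<phi>_eq:
  assumes "g \<in> carrier G" "h \<in> carrier H"
  shows "\<phi> (g, h) = (fst_part g, shear g \<otimes>\<^bsub>H\<^esub> snd_part h)"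
proof -
  have "\<phi> (g, h) = \<phi> (g, \<one>\<^bsub>H\<^esub>) \<otimes>\<^bsub>G \<times>\<times> H\<^esub> \<phi> (\<one>\<^bsub>G\<^esub>, h)"
    using \<phi>_mult[of g "\<one>\<^bsub>H\<^esub>" "\<one>\<^bsub>G\<^esub>" h] assms by simp
  also have "\<dots> = (fst_part g, shear g \<otimes>\<^bsub>H\<^esub> snd_part h)"
    using fst_\<phi>_one[OF assms(2)] \<phi>_closed[of g "\<one>\<^bsub>H\<^esub>"] assms
    by (auto simp: mult_DirProd' fst_part_def snd_part_def shear_def mem_Times_iff)
  finally show ?thesis .
qed

lemma fst_part_auto: "fst_part \<in> auto G"
proof -
  have hom: "fst_part \<in> hom G G"
  proof (rule homI)
    show "fst_part (x \<otimes>\<^bsub>G\<^esub> y) = fst_part x \<otimes>\<^bsub>G\<^esub> fst_part y" if "x \<in> carrier G" "y \<in> carrier G" for x y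
      using \<phi>_mult[of x "\<one>\<^bsub>H\<^esub>" y "\<one>\<^bsub>H\<^esub>"] that by (simp add: fst_part_def mult_DirProd')
  qed (rule fst_part_closed)
  interpret group_hom G G fst_part by unfold_locales (rule hom)
  have "inj_on fst_part (carrier G)"
  proof (rule inj_onI)
    fix x y assume x: "x \<in> carrier G" and y: "y \<in> carrier G" and eq: "fst_part x = fst_part y"
    let ?k = "x \<otimes>\<^bsub>G\<^esub> inv\<^bsub>G\<^esub> y"
    have k: "?k \<in> carrier G" using x y by simp
    have "fst_part ?k = \<one>\<^bsub>G\<^esub>" using x y eq fst_part_closed by (simp add: hom_mult)
    then have "\<phi> (?k, \<one>\<^bsub>H\<^esub>) \<in> \<phi> ` ({\<one>\<^bsub>G\<^esub>} \<times> carrier H)"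
      using preserves \<phi>_eq[OF k H.one_closed] shear_closed[OF k] snd_part_closed by simp
    then have "(?k, \<one>\<^bsub>H\<^esub>) \<in> {\<one>\<^bsub>G\<^esub>} \<times> carrier H"
      using \<phi>_bij k by (auto simp: bij_betw_def inj_on_def)
    then show "x = y" using x y G.inv_solve_right'[of "\<one>\<^bsub>G\<^esub>" x y] by simp
  qed
  moreover have "fst_part ` carrier G = carrier G"
  proof (intro equalityI subsetI)
    fix z assume "z \<in> carrier G"
    then have "(z, \<one>\<^bsub>H\<^esub>) \<in> \<phi> ` (carrier G \<times> carrier H)" using \<phi>_bij by (simp add: bij_betw_def)
    then obtain g h where gh: "g \<in> carrier G" "h \<in> carrier H" "(z, \<one>\<^bsub>H\<^esub>) = \<phi> (g, h)" by auto
    then have "z = fst_part g" using \<phi>_eq[OF gh(1,2)] by simp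
    then show "z \<in> fst_part ` carrier G" using gh(1) by blast
  qed (use fst_part_closed in auto)
  moreover have "fst_part \<in> extensional (carrier G)" by (simp add: fst_part_def)
  ultimately show ?thesis using hom by (simp add: auto_def Bij_def bij_betw_def)
qed

lemma snd_part_auto: "snd_part \<in> auto H"
proof -
  have hom: "snd_part \<in> hom H H"
  proof (rule homI)
    show "snd_part (x \<otimes>\<^bsub>H\<^esub> y) = snd_part x \<otimes>\<^bsub>H\<^esub> snd_part y" if "x \<in> carrier H" "y \<in> carrier H" for x y
      using \<phi>_mult[of "\<one>\<^bsub>G\<^esub>" x "\<one>\<^bsub>G\<^esub>" y] that by (simp add: snd_part_def mult_DirProd')
  qed (rule snd_part_closed)
  have "inj_on snd_part (carrier H)"
  proof (rule inj_onI)
    fix x y assume x: "x \<in> carrier H" and y: "y \<in> carrier H" and eq: "snd_part x = snd_part y"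
    have "\<phi> (\<one>\<^bsub>G\<^esub>, x) = \<phi> (\<one>\<^bsub>G\<^esub>, y)"
      using eq x y fst_\<phi>_one by (simp add: snd_part_def prod_eq_iff)
    then show "x = y" using \<phi>_bij x y by (auto simp: bij_betw_def inj_on_def)
  qed
  moreover have "snd_part ` carrier H = carrier H"
  proof (intro equalityI subsetI)
    fix z assume "z \<in> carrier H"
    then have "(\<one>\<^bsub>G\<^esub>, z) \<in> \<phi> ` ({\<one>\<^bsub>G\<^esub>} \<times> carrier H)" using preserves by simp
    then obtain h where h: "h \<in> carrier H" "(\<one>\<^bsub>G\<^esub>, z) = \<phi> (\<one>\<^bsub>G\<^esub>, h)" by auto
    then have "z = snd_part h" using h by (simp add: snd_part_def) (metis snd_conv)
    then show "z \<in> snd_part ` carrier H" using h(1) by blast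
  qed (use snd_part_closed in auto)
  moreover have "snd_part \<in> extensional (carrier H)" by (simp add: snd_part_def)
  ultimately show ?thesis using hom by (simp add: auto_def Bij_def bij_betw_def)
qed

sublocale triangular_endo G H fst_part snd_part shear \<phi>
proof
  show "fst_part \<in> hom G G" using fst_part_auto by (simp add: auto_def)
  show "snd_part \<in> hom H H" using snd_part_auto by (simp add: auto_def)
  show "shear \<one>\<^bsub>G\<^esub> = \<one>\<^bsub>H\<^esub>"
    using hom_one[OF \<phi>_hom DirProd_group[OF G.is_group H.is_group] DirProd_group[OF G.is_group H.is_group]]
    by (simp add: shear_def)
qed (fact shear_closed \<phi>_hom \<phi>_eq)+

end

theorem spec_R_DirProd:
  assumes "group G" "group H" and char: "characteristic ({\<one>\<^bsub>G\<^esub>} \<times> carrier H) (G \<times>\<times> H)"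
    and free: "\<And>\<alpha> g x. \<alpha> \<in> auto G \<Longrightarrow> finite (reid_classes G \<alpha>) \<Longrightarrow>
      g \<in> carrier G \<Longrightarrow> x \<in> carrier G \<Longrightarrow> twisted_conj G \<alpha> x g = g \<Longrightarrow> x = \<one>\<^bsub>G\<^esub>"
  shows "spec_R (G \<times>\<times> H) = set_rmul (spec_R G) (spec_R H)"
proof -
  interpret G: group G by fact
  interpret H: group H by fact
  have "reidemeister (G \<times>\<times> H) \<phi> \<in> set_rmul (spec_R G) (spec_R H)"
    if \<phi>_auto: "\<phi> \<in> auto (G \<times>\<times> H)" for \<phi>
  proof -
    interpret factor_preserving_auto G H \<phi>
      using char \<phi>_auto by unfold_locales (simp_all add: characteristic_def)
    have "reidemeister (G \<times>\<times> H) \<phi> = rmul (reidemeister G fst_part) (reidemeister H snd_part)"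
      using free[OF fst_part_auto] by (rule reidemeister_triangular)
    then show ?thesis using fst_part_auto snd_part_auto by (auto simp: set_rmul_def spec_R_def)
  qed
  moreover have "rmul (reidemeister G \<alpha>) (reidemeister H \<beta>) \<in> spec_R (G \<times>\<times> H)"
    if \<alpha>_auto: "\<alpha> \<in> auto G" and \<beta>_auto: "\<beta> \<in> auto H" for \<alpha> \<beta>
  proof -
    let ?\<phi> = "restrict (\<lambda>(g, h). (\<alpha> g, \<beta> h)) (carrier (G \<times>\<times> H))"
    have \<phi>_auto: "?\<phi> \<in> auto (G \<times>\<times> H)" by (rule auto_DirProd[OF assms(1,2) \<alpha>_auto \<beta>_auto])
    interpret triangular_endo G H \<alpha> \<beta> "\<lambda>_. \<one>\<^bsub>H\<^esub>" ?\<phi>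
      using \<alpha>_auto \<beta>_auto \<phi>_auto by unfold_locales (auto simp: auto_def hom_in_carrier)
    have "reidemeister (G \<times>\<times> H) ?\<phi> = rmul (reidemeister G \<alpha>) (reidemeister H \<beta>)"
      using free[OF \<alpha>_auto] by (rule reidemeister_triangular)
    then show ?thesis using \<phi>_auto unfolding spec_R_def by force
  qed
  ultimately show ?thesis by (auto simp: spec_R_def set_rmul_def)
qed

theorem mainTheorem12:
  fixes G :: "'a monoid" and H :: "'b monoid"
  assumes "group G" and "group H"
    and "fin_gen_group G" and "torsion_free G" and "residually_finite G"
    and "characteristic ({\<one>\<^bsub>G\<^esub>} \<times> carrier H) (G \<times>\<times> H)"
  shows "spec_R (G \<times>\<times> H) = set_rmul (spec_R G) (spec_R H)"
proof (rule spec_R_DirProd[OF assms(1,2,6)])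
  show "x = \<one>\<^bsub>G\<^esub>"
    if "\<alpha> \<in> auto G" "finite (reid_classes G \<alpha>)" "g \<in> carrier G" "x \<in> carrier G"
      "twisted_conj G \<alpha> x g = g" for \<alpha> g x
    using group.twisted_stabilizer_trivial_if_finite_reidemeister[OF assms(1,3-5) that] .
qed

end
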